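(* Let $\Gamma$ be a finite group acting linearly on a finite-dimensional complex vector space $V$, consider the cotangent lifted action on $T^*V=V\times V^*$, let $R=\mathbb C[T^*V]$, let $\pi:\operatorname{Der}(R)^\Gamma\to\operatorname{Der}(R^\Gamma)$ be the restriction map $X\mapsto X|_{R^\Gamma}$, and let $\lambda:\operatorname{Der}(R^\Gamma)\to\operatorname{Der}(R)^\Gamma$ be an $R^\Gamma$-linear map with $\pi\lambda=\operatorname{id}_{\operatorname{Der}(R^\Gamma)}$. Then $\omega(X,Y):=\omega_0(\lambda(X),\lambda(Y))$, for $X,Y\in\operatorname{Der}(R^\Gamma)$, defines a non-degenerate closed form $\omega\in\operatorname{Alt}^2_{R^\Gamma}(\operatorname{Der}(R^\Gamma),R^\Gamma)$.
   Context: $\omega_0=\sum_i\mathrm dq^i\wedge\mathrm dp_i$ is the canonical symplectic form on $T^*V$, evaluated on derivations of $R$. $\Gamma$ acts on derivations by $X\mapsto(\gamma^{-1})^*X\gamma^*$; $\operatorname{Der}(R)^\Gamma$ denotes invariant derivations. (It is known that $\pi$ is surjective, so such a section $\lambda$ exists.) Closedness is with respect to the naive de Rham differential of the Lie-Rinehart algebra $(\operatorname{Der}(R^\Gamma),R^\Gamma)$: $(\mathrm d\omega)(X_0,X_1,X_2)=\sum_i(-1)^iX_i(\omega(\dots\widehat{X_i}\dots))+\sum_{i<j}(-1)^{i+j}\omega([X_i,X_j],\dots\widehat{X_i}\dots\widehat{X_j}\dots)$. Non-degenerate means $\omega(X,Y)=0$ for all $Y$ implies $X=0$. *)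

theory Defs
  imports "HOL-Analysis.Analysis" "HOL-Algebra.Group"
begin

text \<open>Points of the cotangent space T*V = V x V*, with V = complex^'n and V* identified
with complex^'n via the dual basis: a point is (q, p).\<close>
type_synonym 'n pt = "(complex^'n) \<times> (complex^'n)"

text \<open>R = C[T*V], realised as the ring of polynomial functions on T*V
(faithful since C is infinite).\<close>
inductive_set polyfun :: "('n::finite pt \<Rightarrow> complex) set" where
  const: "(\<lambda>_. c) \<in> polyfun"
| qcoord: "(\<lambda>x. fst x $ i) \<in> polyfun"
| pcoord: "(\<lambda>x. snd x $ i) \<in> polyfun"
| add: "f \<in> polyfun \<Longrightarrow> g \<in> polyfun \<Longrightarrow> (\<lambda>x. f x + g x) \<in> polyfun"
| mult: "f \<in> polyfun \<Longrightarrow> g \<in> polyfun \<Longrightarrow> (\<lambda>x. f x * g x) \<in> polyfun"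

definition cot_act :: "complex^'n^'n \<Rightarrow> 'n::finite pt \<Rightarrow> 'n pt" where
  "cot_act A x = (A *v fst x, transpose (matrix_inv A) *v snd x)"

definition invariants :: "('g, 'b) monoid_scheme \<Rightarrow> ('g \<Rightarrow> complex^'n^'n) \<Rightarrow> ('n::finite pt \<Rightarrow> complex) set" where
  "invariants G \<rho> = {f \<in> polyfun. \<forall>g\<in>carrier G. f \<circ> cot_act (\<rho> g) = f}"

text \<open>C-derivations of a subalgebra S of functions; a derivation is represented as an
operator on functions that is zero outside S (so equality of derivations is equality on S).\<close>
definition derivs :: "('a \<Rightarrow> complex) set \<Rightarrow> (('a \<Rightarrow> complex) \<Rightarrow> ('a \<Rightarrow> complex)) set" where
  "derivs S = {D.
     (\<forall>f\<in>S. D f \<in> S) \<and>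
     (\<forall>f\<in>S. \<forall>g\<in>S. D (\<lambda>x. f x + g x) = (\<lambda>x. D f x + D g x)) \<and>
     (\<forall>c. \<forall>f\<in>S. D (\<lambda>x. c * f x) = (\<lambda>x. c * D f x)) \<and>
     (\<forall>f\<in>S. \<forall>g\<in>S. D (\<lambda>x. f x * g x) = (\<lambda>x. f x * D g x + D f x * g x)) \<and>
     (\<forall>f. f \<notin> S \<longrightarrow> D f = (\<lambda>x. 0))}"

definition inv_derivs :: "('g, 'b) monoid_scheme \<Rightarrow> ('g \<Rightarrow> complex^'n^'n)
     \<Rightarrow> ((('n::finite) pt \<Rightarrow> complex) \<Rightarrow> ('n pt \<Rightarrow> complex)) set" where
  "inv_derivs G \<rho> = {D \<in> derivs polyfun.
     \<forall>g\<in>carrier G. \<forall>f\<in>polyfun. D (f \<circ> cot_act (\<rho> g)) = D f \<circ> cot_act (\<rho> g)}"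

definition omega0 :: "(('n::finite pt \<Rightarrow> complex) \<Rightarrow> ('n pt \<Rightarrow> complex))
     \<Rightarrow> (('n pt \<Rightarrow> complex) \<Rightarrow> ('n pt \<Rightarrow> complex)) \<Rightarrow> ('n pt \<Rightarrow> complex)" where
  "omega0 X Y = (\<lambda>x. \<Sum>i\<in>UNIV.
      X (\<lambda>y. fst y $ i) x * Y (\<lambda>y. snd y $ i) x - X (\<lambda>y. snd y $ i) x * Y (\<lambda>y. fst y $ i) x)"

definition der_add :: "(('a \<Rightarrow> complex) \<Rightarrow> ('a \<Rightarrow> complex)) \<Rightarrow> (('a \<Rightarrow> complex) \<Rightarrow> ('a \<Rightarrow> complex))
     \<Rightarrow> (('a \<Rightarrow> complex) \<Rightarrow> ('a \<Rightarrow> complex))" where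
  "der_add X Y = (\<lambda>f x. X f x + Y f x)"

definition der_smult :: "('a \<Rightarrow> complex) \<Rightarrow> (('a \<Rightarrow> complex) \<Rightarrow> ('a \<Rightarrow> complex))
     \<Rightarrow> (('a \<Rightarrow> complex) \<Rightarrow> ('a \<Rightarrow> complex))" where
  "der_smult a X = (\<lambda>f x. a x * X f x)"

definition der_bracket :: "(('a \<Rightarrow> complex) \<Rightarrow> ('a \<Rightarrow> complex)) \<Rightarrow> (('a \<Rightarrow> complex) \<Rightarrow> ('a \<Rightarrow> complex))
     \<Rightarrow> (('a \<Rightarrow> complex) \<Rightarrow> ('a \<Rightarrow> complex))" where
  "der_bracket X Y = (\<lambda>f x. X (Y f) x - Y (X f) x)"

definition d2 :: "((('a \<Rightarrow> complex) \<Rightarrow> ('a \<Rightarrow> complex)) \<Rightarrow> (('a \<Rightarrow> complex) \<Rightarrow> ('a \<Rightarrow> complex)) \<Rightarrow> ('a \<Rightarrow> complex))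
   \<Rightarrow> (('a \<Rightarrow> complex) \<Rightarrow> ('a \<Rightarrow> complex)) \<Rightarrow> (('a \<Rightarrow> complex) \<Rightarrow> ('a \<Rightarrow> complex))
   \<Rightarrow> (('a \<Rightarrow> complex) \<Rightarrow> ('a \<Rightarrow> complex)) \<Rightarrow> ('a \<Rightarrow> complex)" where
  "d2 w X0 X1 X2 = (\<lambda>x.
       X0 (w X1 X2) x - X1 (w X0 X2) x + X2 (w X0 X1) x
     - w (der_bracket X0 X1) X2 x + w (der_bracket X0 X2) X1 x - w (der_bracket X1 X2) X0 x)"

end

theory Submission
  imports Defs
begin

text \<open>
  Everything is computed pointwise through the vector field \<open>x \<mapsto> (W q\<^sub>i x, W p\<^sub>i x)\<close> of a
  derivation \<open>W\<close> of \<open>R\<close>, in terms of which \<open>\<omega>\<^sub>0(W, W')\<close> is the standard symplectic pairing.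
  Invariant derivations have equivariant vector fields, so \<open>\<omega>\<^sub>0\<close> of two of them is invariant,
  and \<open>d\<omega>\<^sub>0 = 0\<close> passes to \<open>\<omega>\<close> once \<open>\<lambda>\<close> is known to respect brackets.

  Both that and non-degeneracy come from averaging over \<open>\<Gamma>\<close> against a polynomial \<open>v\<close> with
  \<open>v x = 1\<close> that vanishes on the rest of the orbit \<open>\<Gamma>x\<close>. First, for an invariant derivation
  \<open>D\<close> the value \<open>D c x\<close> can be read off from \<open>D\<close> on the invariants \<open>\<Sum>\<^sub>g (v\<^sup>2 c)\<circ>g\<close> and
  \<open>\<Sum>\<^sub>g v\<^sup>2\<circ>g\<close>; hence \<open>\<pi>\<close> is injective on invariant derivations, which gives \<open>\<lambda>\<pi> = id\<close> and
  \<open>\<lambda>[X,Y] = [\<lambda>X,\<lambda>Y]\<close>. Second, the averaged vector fields \<open>x \<mapsto> \<Sum>\<^sub>g u(gx) g\<^sup>-\<^sup>1e\<close> define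
  invariant derivations. For \<open>u = v\<close>, equivariance turns the \<open>\<omega>\<^sub>0\<close>-pairing of an invariant
  derivation \<open>W\<close> with such a field at \<open>x\<close> into \<open>|Stab x|\<close> times the pairing of \<open>W\<close>'s vector
  field at \<open>x\<close> with \<open>e\<close>; so if \<open>W\<close> is \<open>\<omega>\<^sub>0\<close>-orthogonal to all of them, its vector field vanishes.
\<close>

section \<open>Function algebras and their derivations\<close>

definition function_algebra :: "('a \<Rightarrow> complex) set \<Rightarrow> bool" where
  "function_algebra S \<longleftrightarrow> (\<forall>c. (\<lambda>_. c) \<in> S) \<and> (\<forall>f\<in>S. \<forall>g\<in>S. (\<lambda>x. f x + g x) \<in> S)
     \<and> (\<forall>f\<in>S. \<forall>g\<in>S. (\<lambda>x. f x * g x) \<in> S)"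

context
  fixes S :: "('a \<Rightarrow> complex) set"
  assumes S: "function_algebra S"
begin

lemma function_algebra_const: "(\<lambda>_. c) \<in> S"
  using S unfolding function_algebra_def by blast

lemma function_algebra_add: "f \<in> S \<Longrightarrow> g \<in> S \<Longrightarrow> (\<lambda>x. f x + g x) \<in> S"
  using S unfolding function_algebra_def by blast

lemma function_algebra_mult: "f \<in> S \<Longrightarrow> g \<in> S \<Longrightarrow> (\<lambda>x. f x * g x) \<in> S"
  using S unfolding function_algebra_def by blast

lemma function_algebra_cmult: "f \<in> S \<Longrightarrow> (\<lambda>x. c * f x) \<in> S"
  using function_algebra_mult[OF function_algebra_const] .

lemma function_algebra_diff: "f \<in> S \<Longrightarrow> g \<in> S \<Longrightarrow> (\<lambda>x. f x - g x) \<in> S"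
  using function_algebra_add[of f "\<lambda>x. (- 1) * g x"] function_algebra_cmult[of g "- 1"] by simp

lemma function_algebra_sum: "(\<And>a. a \<in> A \<Longrightarrow> f a \<in> S) \<Longrightarrow> (\<lambda>x. \<Sum>a\<in>A. f a x) \<in> S"
proof (induction A rule: infinite_finite_induct)
  case (insert a A)
  then show ?case using function_algebra_add[of "f a" "\<lambda>x. \<Sum>a\<in>A. f a x"] by simp
qed (simp_all add: function_algebra_const)

end

lemma derivs_closed: "D \<in> derivs S \<Longrightarrow> f \<in> S \<Longrightarrow> D f \<in> S"
  unfolding derivs_def by blast

lemma derivs_add: "D \<in> derivs S \<Longrightarrow> f \<in> S \<Longrightarrow> g \<in> S \<Longrightarrow> D (\<lambda>x. f x + g x) = (\<lambda>x. D f x + D g x)"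
  unfolding derivs_def by blast

lemma derivs_cmult: "D \<in> derivs S \<Longrightarrow> f \<in> S \<Longrightarrow> D (\<lambda>x. c * f x) = (\<lambda>x. c * D f x)"
  unfolding derivs_def by blast

lemma derivs_mult:
  "D \<in> derivs S \<Longrightarrow> f \<in> S \<Longrightarrow> g \<in> S \<Longrightarrow> D (\<lambda>x. f x * g x) = (\<lambda>x. f x * D g x + D f x * g x)"
  unfolding derivs_def by blast

lemma derivs_outside: "D \<in> derivs S \<Longrightarrow> f \<notin> S \<Longrightarrow> D f = (\<lambda>_. 0)"
  unfolding derivs_def by blast

context
  fixes S :: "('a \<Rightarrow> complex) set" and D
  assumes S: "function_algebra S" and D: "D \<in> derivs S"
begin

lemma derivs_const: "D (\<lambda>_. c) = (\<lambda>_. 0)"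
proof -
  have "D (\<lambda>_. 1) = (\<lambda>x. 1 * D (\<lambda>_. 1) x + D (\<lambda>_. 1) x * 1)"
    using derivs_mult[OF D, of "\<lambda>_. 1" "\<lambda>_. 1"] function_algebra_const[OF S] by simp
  then have "D (\<lambda>_. 1) = (\<lambda>_. 0)"
    by (simp add: fun_eq_iff)
  then show ?thesis
    using derivs_cmult[OF D, of "\<lambda>_. 1" c] function_algebra_const[OF S] by simp
qed

lemma derivs_diff: "f \<in> S \<Longrightarrow> g \<in> S \<Longrightarrow> D (\<lambda>x. f x - g x) = (\<lambda>x. D f x - D g x)"
  using derivs_add[OF D, of f "\<lambda>x. (- 1) * g x"] derivs_cmult[OF D, of g "- 1"]
    function_algebra_cmult[OF S, of g "- 1"] by simp

lemma derivs_sum: "(\<And>a. a \<in> A \<Longrightarrow> f a \<in> S) \<Longrightarrow> D (\<lambda>x. \<Sum>a\<in>A. f a x) = (\<lambda>x. \<Sum>a\<in>A. D (f a) x)"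
proof (induction A rule: infinite_finite_induct)
  case (insert a A)
  then show ?case
    using derivs_add[OF D, of "f a" "\<lambda>x. \<Sum>a\<in>A. f a x"] function_algebra_sum[OF S, of A f] by simp
qed (simp_all add: derivs_const)

end

context
  fixes S :: "('a \<Rightarrow> complex) set" and A B
  assumes S: "function_algebra S" and A: "A \<in> derivs S" and B: "B \<in> derivs S"
begin

lemma derivs_derivs_add:
  assumes f: "f \<in> S" and g: "g \<in> S"
  shows "A (B (\<lambda>x. f x + g x)) = (\<lambda>x. A (B f) x + A (B g) x)"
  using derivs_add[OF B f g] derivs_add[OF A derivs_closed[OF B f] derivs_closed[OF B g]] by simp

lemma derivs_derivs_cmult:
  assumes f: "f \<in> S"
  shows "A (B (\<lambda>x. c * f x)) = (\<lambda>x. c * A (B f) x)"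
  using derivs_cmult[OF B f] derivs_cmult[OF A derivs_closed[OF B f]] by simp

lemma derivs_derivs_mult:
  assumes f: "f \<in> S" and g: "g \<in> S"
  shows "A (B (\<lambda>x. f x * g x))
    = (\<lambda>x. f x * A (B g) x + A f x * B g x + B f x * A g x + A (B f) x * g x)"
proof -
  have Bf: "B f \<in> S" and Bg: "B g \<in> S"
    using f g by (simp_all add: derivs_closed[OF B])
  have "A (B (\<lambda>x. f x * g x)) = A (\<lambda>x. f x * B g x + B f x * g x)"
    by (simp add: derivs_mult[OF B f g])
  also have "\<dots> = (\<lambda>x. A (\<lambda>x. f x * B g x) x + A (\<lambda>x. B f x * g x) x)"
    by (rule derivs_add[OF A function_algebra_mult[OF S f Bg] function_algebra_mult[OF S Bf g]])
  finally show ?thesis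
    by (simp add: derivs_mult[OF A f Bg] derivs_mult[OF A Bf g] add.assoc)
qed

end

lemma der_bracket_derivs:
  assumes S: "function_algebra S" and A: "A \<in> derivs S" and B: "B \<in> derivs S"
  shows "der_bracket A B \<in> derivs S"
  unfolding derivs_def mem_Collect_eq
proof (intro conjI ballI allI impI)
  fix f assume f: "f \<in> S"
  show "der_bracket A B f \<in> S"
    unfolding der_bracket_def
    by (rule function_algebra_diff[OF S derivs_closed[OF A derivs_closed[OF B f]]
          derivs_closed[OF B derivs_closed[OF A f]]])
  show "der_bracket A B (\<lambda>x. c * f x) = (\<lambda>x. c * der_bracket A B f x)" for c
    unfolding der_bracket_def
    by (simp add: derivs_derivs_cmult[OF S A B f] derivs_derivs_cmult[OF S B A f] algebra_simps)
  fix g assume g: "g \<in> S"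
  show "der_bracket A B (\<lambda>x. f x + g x) = (\<lambda>x. der_bracket A B f x + der_bracket A B g x)"
    unfolding der_bracket_def
    by (simp add: derivs_derivs_add[OF S A B f g] derivs_derivs_add[OF S B A f g] algebra_simps)
  show "der_bracket A B (\<lambda>x. f x * g x) = (\<lambda>x. f x * der_bracket A B g x + der_bracket A B f x * g x)"
    unfolding der_bracket_def
    by (simp add: derivs_derivs_mult[OF S A B f g] derivs_derivs_mult[OF S B A f g] algebra_simps)
next
  fix f assume "f \<notin> S"
  then show "der_bracket A B f = (\<lambda>_. 0)"
    by (simp add: der_bracket_def derivs_outside[OF A] derivs_outside[OF B]
        derivs_const[OF S A] derivs_const[OF S B])
qed

text \<open>The restriction map \<open>\<pi>\<close>, in the representation of \<^const>\<open>derivs\<close> (zero off the algebra).\<close>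

definition der_restrict :: "('a \<Rightarrow> complex) set \<Rightarrow> (('a \<Rightarrow> complex) \<Rightarrow> ('a \<Rightarrow> complex))
    \<Rightarrow> (('a \<Rightarrow> complex) \<Rightarrow> ('a \<Rightarrow> complex))" where
  "der_restrict S D = (\<lambda>f. if f \<in> S then D f else (\<lambda>_. 0))"

lemma der_restrict_derivs:
  assumes S: "function_algebra S" and "S \<subseteq> T" and D: "D \<in> derivs T"
    and closed: "\<And>f. f \<in> S \<Longrightarrow> D f \<in> S"
  shows "der_restrict S D \<in> derivs S"
  unfolding derivs_def mem_Collect_eq
proof (intro conjI ballI allI impI)
  have restrict: "der_restrict S D h = D h" if "h \<in> S" for h
    using that by (simp add: der_restrict_def)
  fix f assume f: "f \<in> S"
  then have fT: "f \<in> T" using \<open>S \<subseteq> T\<close> by blast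
  show "der_restrict S D f \<in> S" using closed[OF f] by (simp only: restrict[OF f])
  show "der_restrict S D (\<lambda>x. c * f x) = (\<lambda>x. c * der_restrict S D f x)" for c
    unfolding restrict[OF function_algebra_cmult[OF S f]] restrict[OF f]
    by (rule derivs_cmult[OF D fT])
  fix g assume g: "g \<in> S"
  then have gT: "g \<in> T" using \<open>S \<subseteq> T\<close> by blast
  show "der_restrict S D (\<lambda>x. f x + g x) = (\<lambda>x. der_restrict S D f x + der_restrict S D g x)"
    unfolding restrict[OF function_algebra_add[OF S f g]] restrict[OF f] restrict[OF g]
    by (rule derivs_add[OF D fT gT])
  show "der_restrict S D (\<lambda>x. f x * g x)
      = (\<lambda>x. f x * der_restrict S D g x + der_restrict S D f x * g x)"
    unfolding restrict[OF function_algebra_mult[OF S f g]] restrict[OF f] restrict[OF g]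
    by (rule derivs_mult[OF D fT gT])
qed (simp add: der_restrict_def)

section \<open>Polynomial functions on the cotangent space\<close>

abbreviation q_coord :: "'n::finite \<Rightarrow> 'n pt \<Rightarrow> complex" where
  "q_coord i \<equiv> \<lambda>x. fst x $ i"

abbreviation p_coord :: "'n::finite \<Rightarrow> 'n pt \<Rightarrow> complex" where
  "p_coord i \<equiv> \<lambda>x. snd x $ i"

declare polyfun.intros [intro] polyfun.const [simp] polyfun.qcoord [simp] polyfun.pcoord [simp]

lemma function_algebra_polyfun: "function_algebra polyfun"
  unfolding function_algebra_def by blast

lemmas polyfun_cmult [intro] = function_algebra_cmult[OF function_algebra_polyfun]
  and polyfun_diff [intro] = function_algebra_diff[OF function_algebra_polyfun]
  and polyfun_sum [intro] = function_algebra_sum[OF function_algebra_polyfun]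

lemma polyfun_linear_subst: "f \<in> polyfun \<Longrightarrow> (\<lambda>x. f (P *v fst x, Q *v snd x)) \<in> polyfun"
proof (induction rule: polyfun.induct)
  case (qcoord i)
  have "(\<lambda>x. fst (P *v fst x, Q *v snd x) $ i) = (\<lambda>x. \<Sum>k\<in>UNIV. P$i$k * fst x $ k)"
    by (simp add: matrix_vector_mult_def)
  then show ?case by (auto intro!: polyfun_sum polyfun_cmult)
next
  case (pcoord i)
  have "(\<lambda>x. snd (P *v fst x, Q *v snd x) $ i) = (\<lambda>x. \<Sum>k\<in>UNIV. Q$i$k * snd x $ k)"
    by (simp add: matrix_vector_mult_def)
  then show ?case by (auto intro!: polyfun_sum polyfun_cmult)
qed auto

lemma polyfun_comp_cot_act: "f \<in> polyfun \<Longrightarrow> (\<lambda>x. f (cot_act M x)) \<in> polyfun"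
  using polyfun_linear_subst[of f M "transpose (matrix_inv M)"] by (simp add: cot_act_def)

lemma polyfun_bump:
  fixes x :: "'n::finite pt"
  assumes "finite F" "x \<notin> F"
  shows "\<exists>v\<in>polyfun. v x = 1 \<and> (\<forall>y\<in>F. v y = 0)"
  using assms
proof (induction F rule: finite_induct)
  case empty
  show ?case by (intro bexI[of _ "\<lambda>_. 1"]) auto
next
  case (insert y F)
  then obtain v where v: "v \<in> polyfun" "v x = 1" "\<forall>y\<in>F. v y = 0" by auto
  have "fst x \<noteq> fst y \<or> snd x \<noteq> snd y"
    using insert.prems by (auto simp: prod_eq_iff)
  then obtain L where L: "L \<in> polyfun" "L x \<noteq> L y"
    by (metis polyfun.qcoord polyfun.pcoord vec_eq_iff)
  let ?w = "\<lambda>z. v z * (inverse (L x - L y) * (L z - L y))"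
  have "?w \<in> polyfun" using v L by (intro polyfun.mult polyfun_cmult polyfun_diff) auto
  moreover have "?w x = 1" "\<forall>z\<in>insert y F. ?w z = 0" using v L by auto
  ultimately show ?case by (intro bexI[of _ ?w]) auto
qed

lemma matrix_inv_inverse: "invertible M \<Longrightarrow> M ** matrix_inv M = mat 1 \<and> matrix_inv M ** M = mat 1"
  unfolding invertible_def matrix_inv_def by (rule someI_ex)

lemma matrix_inv_unique:
  fixes M N :: "'a::comm_ring_1^'n::finite^'n"
  assumes "M ** N = mat 1" "N ** M = mat 1"
  shows "matrix_inv M = N"
proof -
  have "invertible M" using assms unfolding invertible_def by blast
  have "matrix_inv M = (matrix_inv M ** M) ** N"
    using assms(1) by (simp add: matrix_mul_assoc[symmetric])
  then show ?thesis using matrix_inv_inverse[OF \<open>invertible M\<close>] by simp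
qed

lemma matrix_inv_mult:
  fixes A B :: "'a::comm_ring_1^'n::finite^'n"
  assumes A: "invertible A" and B: "invertible B"
  shows "matrix_inv (A ** B) = matrix_inv B ** matrix_inv A"
  using matrix_inv_inverse[OF A] matrix_inv_inverse[OF B]
  by (intro matrix_inv_unique) (metis matrix_mul_assoc matrix_mul_rid)+

lemma matrix_inv_mat_1: "matrix_inv (mat 1 :: 'a::comm_ring_1^'n::finite^'n) = mat 1"
  by (rule matrix_inv_unique) simp_all

lemma cot_act_mult:
  assumes "invertible A" "invertible B"
  shows "cot_act (A ** B) x = cot_act A (cot_act B x)"
  using assms by (simp add: cot_act_def matrix_inv_mult matrix_vector_mul_assoc vector_matrix_mul_assoc)

lemma cot_act_mat_1: "cot_act (mat 1) x = x"
  by (simp add: cot_act_def matrix_inv_mat_1)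

text \<open>The product type only carries real scaling, so complex scaling of points is defined here.\<close>

definition pt_scale :: "complex \<Rightarrow> 'n::finite pt \<Rightarrow> 'n pt" where
  "pt_scale c v = (c *s fst v, c *s snd v)"

lemma pt_scale_zero [simp]: "pt_scale 0 v = 0"
  by (simp add: pt_scale_def zero_prod_def)

lemma cot_act_add: "cot_act M (x + y) = cot_act M x + cot_act M y"
  by (simp add: cot_act_def matrix_vector_right_distrib vector_matrix_left_distrib)

lemma cot_act_pt_scale: "cot_act M (pt_scale c v) = pt_scale c (cot_act M v)"
  by (simp add: cot_act_def pt_scale_def vector_scalar_commute scalar_vector_matrix_assoc)

lemma cot_act_zero: "cot_act M 0 = 0"
  by (simp add: cot_act_def zero_prod_def)

lemma cot_act_sum: "cot_act M (\<Sum>a\<in>A. f a) = (\<Sum>a\<in>A. cot_act M (f a))"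
  by (induction A rule: infinite_finite_induct) (simp_all add: cot_act_zero cot_act_add)

definition symp_pair :: "'n::finite pt \<Rightarrow> 'n pt \<Rightarrow> complex" where
  "symp_pair a b = (\<Sum>i\<in>UNIV. fst a $ i * snd b $ i - snd a $ i * fst b $ i)"

lemma sum_matrix_vector_mult_pairing:
  fixes M :: "'a::comm_semiring_1^'n::finite^'n"
  shows "(\<Sum>i\<in>UNIV. (M *v u) $ i * w $ i) = (\<Sum>j\<in>UNIV. u $ j * (w v* M) $ j)"
proof -
  have "(\<Sum>i\<in>UNIV. (M *v u) $ i * w $ i) = (\<Sum>i\<in>UNIV. \<Sum>j\<in>UNIV. M$i$j * u$j * w$i)"
    by (simp add: matrix_vector_mult_def sum_distrib_right)
  also have "\<dots> = (\<Sum>j\<in>UNIV. \<Sum>i\<in>UNIV. M$i$j * u$j * w$i)"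
    by (rule sum.swap)
  also have "\<dots> = (\<Sum>j\<in>UNIV. u $ j * (w v* M) $ j)"
    by (simp add: vector_matrix_mult_def sum_distrib_left mult_ac)
  finally show ?thesis .
qed

lemma symp_pair_cot_act:
  assumes "invertible M"
  shows "symp_pair (cot_act M a) (cot_act M b) = symp_pair a b"
proof -
  have pair: "(\<Sum>i\<in>UNIV. (M *v u) $ i * (w v* matrix_inv M) $ i) = (\<Sum>i\<in>UNIV. u $ i * w $ i)" for u w
    using matrix_inv_inverse[OF assms]
    by (simp add: sum_matrix_vector_mult_pairing vector_matrix_mul_assoc)
  show ?thesis
    using pair[of "fst a" "snd b"] pair[of "fst b" "snd a"]
    by (simp add: symp_pair_def cot_act_def sum_subtractf mult.commute)
qed

lemma symp_pair_sum_right: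
  "symp_pair a (\<Sum>g\<in>A. pt_scale (c g) (e g)) = (\<Sum>g\<in>A. c g * symp_pair a (e g))"
proof -
  have "symp_pair a (\<Sum>g\<in>A. pt_scale (c g) (e g))
      = (\<Sum>i\<in>UNIV. \<Sum>g\<in>A. c g * (fst a $ i * snd (e g) $ i - snd a $ i * fst (e g) $ i))"
    unfolding symp_pair_def pt_scale_def
    by (simp add: fst_sum snd_sum sum_distrib_left sum_subtractf[symmetric] algebra_simps)
  also have "\<dots> = (\<Sum>g\<in>A. \<Sum>i\<in>UNIV. c g * (fst a $ i * snd (e g) $ i - snd a $ i * fst (e g) $ i))"
    by (rule sum.swap)
  also have "\<dots> = (\<Sum>g\<in>A. c g * symp_pair a (e g))"
    unfolding symp_pair_def by (simp only: sum_distrib_left)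
  finally show ?thesis .
qed

lemma symp_pair_axis:
  "symp_pair a (0, axis j 1) = fst a $ j" "symp_pair a (axis j 1, 0) = - snd a $ j"
proof -
  have "symp_pair a (0, axis j 1) = (\<Sum>i\<in>UNIV. if i = j then fst a $ j else 0)"
    unfolding symp_pair_def axis_def by (intro sum.cong) auto
  then show "symp_pair a (0, axis j 1) = fst a $ j" by simp
  have "symp_pair a (axis j 1, 0) = (\<Sum>i\<in>UNIV. if i = j then - snd a $ j else 0)"
    unfolding symp_pair_def axis_def by (intro sum.cong) auto
  then show "symp_pair a (axis j 1, 0) = - snd a $ j" by simp
qed

lemma symp_pair_nondegenerate:
  assumes "\<And>b. symp_pair a b = 0"
  shows "a = 0"
proof -
  have "fst a $ j = 0" "snd a $ j = 0" for j
    using assms[of "(0, axis j 1)"] assms[of "(axis j 1, 0)"] by (simp_all add: symp_pair_axis)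
  then show ?thesis by (simp add: prod_eq_iff vec_eq_iff)
qed

type_synonym 'n der = "('n pt \<Rightarrow> complex) \<Rightarrow> ('n pt \<Rightarrow> complex)"

definition der_field :: "'n::finite der \<Rightarrow> 'n pt \<Rightarrow> 'n pt" where
  "der_field W x = ((\<chi> i. W (q_coord i) x), (\<chi> i. W (p_coord i) x))"

lemma omega0_eq_symp_pair: "omega0 X Y x = symp_pair (der_field X x) (der_field Y x)"
  unfolding omega0_def symp_pair_def der_field_def by simp

lemma omega0_der_add: "omega0 (der_add A B) C = (\<lambda>x. omega0 A C x + omega0 B C x)"
  unfolding omega0_def der_add_def by (simp add: fun_eq_iff sum.distrib[symmetric] algebra_simps)

lemma omega0_der_smult: "omega0 (der_smult a A) C = (\<lambda>x. a x * omega0 A C x)"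
  unfolding omega0_def der_smult_def by (simp add: fun_eq_iff sum_distrib_left algebra_simps)

lemma omega0_self: "omega0 A A = (\<lambda>_. 0)"
  unfolding omega0_def by (simp add: mult.commute)

lemma derivs_polyfun_eqI:
  assumes D1: "D1 \<in> derivs polyfun" and D2: "D2 \<in> derivs polyfun"
    and "\<And>i. D1 (q_coord i) = D2 (q_coord i)" "\<And>i. D1 (p_coord i) = D2 (p_coord i)"
  shows "D1 = D2"
proof
  fix f
  show "D1 f = D2 f"
  proof (cases "f \<in> polyfun")
    case True
    then show ?thesis
      by (induction rule: polyfun.induct)
        (simp_all add: assms derivs_add[OF D1] derivs_add[OF D2] derivs_mult[OF D1] derivs_mult[OF D2]
          derivs_const[OF function_algebra_polyfun D1] derivs_const[OF function_algebra_polyfun D2])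
  qed (simp add: derivs_outside[OF D1] derivs_outside[OF D2])
qed

lemma zero_derivs_polyfun: "(\<lambda>f x. 0) \<in> derivs polyfun"
  unfolding derivs_def by simp

lemma der_field_eq_0_imp_zero:
  assumes "W \<in> derivs polyfun" "\<And>x. der_field W x = 0"
  shows "W = (\<lambda>f x. 0)"
  using assms(2)
  by (intro derivs_polyfun_eqI[OF assms(1) zero_derivs_polyfun])
    (auto simp: der_field_def prod_eq_iff vec_eq_iff fun_eq_iff)

lemma der_field_cot_act:
  assumes W: "W \<in> derivs polyfun"
    and equiv: "\<And>f. f \<in> polyfun \<Longrightarrow> W (\<lambda>x. f (cot_act M x)) = (\<lambda>x. W f (cot_act M x))"
  shows "der_field W (cot_act M x) = cot_act M (der_field W x)"
proof -
  have lin: "W (\<lambda>y. \<Sum>k\<in>UNIV. c k * h k y) = (\<lambda>y. \<Sum>k\<in>UNIV. c k * W (h k) y)"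
    if "\<And>k. h k \<in> polyfun" for c h
    using that by (simp add: derivs_sum[OF function_algebra_polyfun W] derivs_cmult[OF W] polyfun_cmult)
  have q: "W (q_coord i) (cot_act M x) = (\<Sum>k\<in>UNIV. M$i$k * W (q_coord k) x)" for i
  proof -
    have "(\<lambda>y. q_coord i (cot_act M y)) = (\<lambda>y. \<Sum>k\<in>UNIV. M$i$k * q_coord k y)"
      by (simp add: cot_act_def matrix_vector_mult_def)
    then have "W (\<lambda>y. q_coord i (cot_act M y)) = (\<lambda>y. \<Sum>k\<in>UNIV. M$i$k * W (q_coord k) y)"
      using lin[of q_coord "\<lambda>k. M$i$k"] by simp
    then show ?thesis using equiv[OF polyfun.qcoord, of i] by (metis)
  qed
  have p: "W (p_coord i) (cot_act M x) = (\<Sum>k\<in>UNIV. matrix_inv M$k$i * W (p_coord k) x)" for i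
  proof -
    have "(\<lambda>y. p_coord i (cot_act M y)) = (\<lambda>y. \<Sum>k\<in>UNIV. matrix_inv M$k$i * p_coord k y)"
      by (simp add: cot_act_def vector_matrix_mult_def mult.commute)
    then have "W (\<lambda>y. p_coord i (cot_act M y)) = (\<lambda>y. \<Sum>k\<in>UNIV. matrix_inv M$k$i * W (p_coord k) y)"
      using lin[of p_coord "\<lambda>k. matrix_inv M$k$i"] by simp
    then show ?thesis using equiv[OF polyfun.pcoord, of i] by (metis)
  qed
  show ?thesis
    unfolding der_field_def q p
    by (simp add: cot_act_def matrix_vector_mult_def vector_matrix_mult_def transpose_def mult.commute)
qed

definition symp_coord :: "'n::finite \<Rightarrow> 'n der \<Rightarrow> 'n der \<Rightarrow> 'n pt \<Rightarrow> complex" where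
  "symp_coord i X Y = (\<lambda>x. X (q_coord i) x * Y (p_coord i) x - X (p_coord i) x * Y (q_coord i) x)"

lemma omega0_eq_sum_symp_coord: "omega0 X Y = (\<lambda>x. \<Sum>i\<in>UNIV. symp_coord i X Y x)"
  by (simp add: omega0_def symp_coord_def)

lemma polyfun_symp_coord:
  assumes "X \<in> derivs polyfun" "Y \<in> derivs polyfun"
  shows "symp_coord i X Y \<in> polyfun"
  unfolding symp_coord_def
  by (intro polyfun_diff polyfun.mult derivs_closed[OF assms(1)] derivs_closed[OF assms(2)]
      polyfun.qcoord polyfun.pcoord)

lemma derivs_symp_coord:
  assumes W: "W \<in> derivs polyfun" and X: "X \<in> derivs polyfun" and Y: "Y \<in> derivs polyfun"
  shows "W (symp_coord i X Y) = (\<lambda>x.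
      W (X (q_coord i)) x * Y (p_coord i) x + X (q_coord i) x * W (Y (p_coord i)) x
    - W (X (p_coord i)) x * Y (q_coord i) x - X (p_coord i) x * W (Y (q_coord i)) x)"
proof -
  have closed: "X (q_coord i) \<in> polyfun" "X (p_coord i) \<in> polyfun"
    "Y (q_coord i) \<in> polyfun" "Y (p_coord i) \<in> polyfun"
    using X Y by (simp_all add: derivs_closed)
  show ?thesis
    unfolding symp_coord_def
      derivs_diff[OF function_algebra_polyfun W polyfun.mult polyfun.mult, OF closed(1,4) closed(2,3)]
    by (simp add: derivs_mult[OF W] closed fun_eq_iff algebra_simps)
qed

lemma d2_symp_coord:
  assumes "A \<in> derivs polyfun" "B \<in> derivs polyfun" "C \<in> derivs polyfun"
  shows "d2 (symp_coord i) A B C = (\<lambda>_. 0)"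
  unfolding d2_def derivs_symp_coord[OF assms(1,2,3)] derivs_symp_coord[OF assms(2,1,3)]
    derivs_symp_coord[OF assms(3,1,2)]
  by (simp add: symp_coord_def der_bracket_def fun_eq_iff algebra_simps)

lemma derivs_omega0:
  assumes W: "W \<in> derivs polyfun" and "X \<in> derivs polyfun" "Y \<in> derivs polyfun"
  shows "W (omega0 X Y) = (\<lambda>x. \<Sum>i\<in>UNIV. W (symp_coord i X Y) x)"
  unfolding omega0_eq_sum_symp_coord
  by (rule derivs_sum[OF function_algebra_polyfun W]) (rule polyfun_symp_coord[OF assms(2,3)])

lemma d2_omega0:
  assumes "A \<in> derivs polyfun" "B \<in> derivs polyfun" "C \<in> derivs polyfun"
  shows "d2 omega0 A B C = (\<lambda>_. 0)"
proof
  fix x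
  have "d2 omega0 A B C x = (\<Sum>i\<in>UNIV. d2 (symp_coord i) A B C x)"
    unfolding d2_def derivs_omega0[OF assms(1,2,3)] derivs_omega0[OF assms(2,1,3)]
      derivs_omega0[OF assms(3,1,2)]
    unfolding omega0_eq_sum_symp_coord
    by (simp add: sum.distrib sum_subtractf)
  then show "d2 omega0 A B C x = 0" by (simp add: d2_symp_coord[OF assms])
qed

section \<open>Derivations along polynomial vector fields\<close>

text \<open>Elements of \<^const>\<open>polyfun\<close> are functions, not polynomial expressions, so the derivation
  along a vector field is defined analytically: by differentiating along complex lines.\<close>

definition dir_deriv :: "('n::finite pt \<Rightarrow> complex) \<Rightarrow> 'n pt \<Rightarrow> 'n pt \<Rightarrow> complex" where
  "dir_deriv f x v = deriv (\<lambda>t. f (x + pt_scale t v)) 0"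

lemma field_differentiable_along_line:
  "f \<in> polyfun \<Longrightarrow> (\<lambda>t. f (a + pt_scale t v)) field_differentiable (at 0)"
  by (induction f rule: polyfun.induct) (auto simp: pt_scale_def intro!: derivative_intros)

lemma has_field_derivative_dir_deriv:
  "f \<in> polyfun \<Longrightarrow> ((\<lambda>t. f (x + pt_scale t v)) has_field_derivative dir_deriv f x v) (at 0)"
  unfolding dir_deriv_def DERIV_deriv_iff_field_differentiable by (rule field_differentiable_along_line)

lemma dir_deriv_add:
  "f \<in> polyfun \<Longrightarrow> g \<in> polyfun \<Longrightarrow> dir_deriv (\<lambda>x. f x + g x) x v = dir_deriv f x v + dir_deriv g x v"
  unfolding dir_deriv_def[of "\<lambda>x. f x + g x"]
  by (intro DERIV_imp_deriv DERIV_add has_field_derivative_dir_deriv)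

lemma dir_deriv_mult:
  assumes "f \<in> polyfun" "g \<in> polyfun"
  shows "dir_deriv (\<lambda>x. f x * g x) x v = f x * dir_deriv g x v + dir_deriv f x v * g x"
  unfolding dir_deriv_def[of "\<lambda>x. f x * g x"]
  using DERIV_mult'[OF has_field_derivative_dir_deriv[OF assms(1), of x v]
      has_field_derivative_dir_deriv[OF assms(2), of x v]]
  by (intro DERIV_imp_deriv) simp

lemma dir_deriv_cmult: "f \<in> polyfun \<Longrightarrow> dir_deriv (\<lambda>x. c * f x) x v = c * dir_deriv f x v"
  unfolding dir_deriv_def[of "\<lambda>x. c * f x"]
  by (intro DERIV_imp_deriv DERIV_cmult has_field_derivative_dir_deriv)

lemma dir_deriv_const: "dir_deriv (\<lambda>_. c) x v = 0"
  by (simp add: dir_deriv_def)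

lemma dir_deriv_q_coord: "dir_deriv (q_coord i) x v = fst v $ i"
  and dir_deriv_p_coord: "dir_deriv (p_coord i) x v = snd v $ i"
  unfolding dir_deriv_def pt_scale_def by (auto intro!: DERIV_imp_deriv derivative_eq_intros)

lemma dir_deriv_cot_act: "dir_deriv (\<lambda>y. f (cot_act M y)) x v = dir_deriv f (cot_act M x) (cot_act M v)"
  unfolding dir_deriv_def by (simp add: cot_act_add cot_act_pt_scale)

definition poly_vfield :: "('n::finite pt \<Rightarrow> 'n pt) \<Rightarrow> bool" where
  "poly_vfield \<xi> \<longleftrightarrow> (\<forall>i. (\<lambda>x. fst (\<xi> x) $ i) \<in> polyfun \<and> (\<lambda>x. snd (\<xi> x) $ i) \<in> polyfun)"

lemma polyfun_dir_deriv: "f \<in> polyfun \<Longrightarrow> poly_vfield \<xi> \<Longrightarrow> (\<lambda>x. dir_deriv f x (\<xi> x)) \<in> polyfun"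
  by (induction rule: polyfun.induct)
    (auto simp: poly_vfield_def dir_deriv_const dir_deriv_q_coord dir_deriv_p_coord dir_deriv_add dir_deriv_mult)

definition vfield_deriv :: "('n::finite pt \<Rightarrow> 'n pt) \<Rightarrow> 'n der" where
  "vfield_deriv \<xi> f = (if f \<in> polyfun then (\<lambda>x. dir_deriv f x (\<xi> x)) else (\<lambda>_. 0))"

lemma vfield_deriv_derivs: "poly_vfield \<xi> \<Longrightarrow> vfield_deriv \<xi> \<in> derivs polyfun"
  unfolding derivs_def vfield_deriv_def
  by (auto simp: polyfun_dir_deriv dir_deriv_add dir_deriv_cmult dir_deriv_mult)

lemma der_field_vfield_deriv: "der_field (vfield_deriv \<xi>) x = \<xi> x"
  by (simp add: der_field_def vfield_deriv_def dir_deriv_q_coord dir_deriv_p_coord)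

lemma vfield_deriv_comp_cot_act:
  assumes "\<And>x. \<xi> (cot_act M x) = cot_act M (\<xi> x)" "f \<in> polyfun"
  shows "vfield_deriv \<xi> (\<lambda>x. f (cot_act M x)) = (\<lambda>x. vfield_deriv \<xi> f (cot_act M x))"
  using assms by (simp add: vfield_deriv_def polyfun_comp_cot_act dir_deriv_cot_act)

section \<open>Invariant derivations\<close>

locale cotangent_representation = group G for G :: "('g, 'b) monoid_scheme" (structure) +
  fixes \<rho> :: "'g \<Rightarrow> complex^'n::finite^'n"
  assumes finite_carrier: "finite (carrier G)"
    and invertible_rep: "g \<in> carrier G \<Longrightarrow> invertible (\<rho> g)"
    and rep_mult: "g \<in> carrier G \<Longrightarrow> h \<in> carrier G \<Longrightarrow> \<rho> (g \<otimes> h) = \<rho> g ** \<rho> h"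
begin

abbreviation act :: "'g \<Rightarrow> 'n pt \<Rightarrow> 'n pt" where
  "act g \<equiv> cot_act (\<rho> g)"

lemma act_mult: "g \<in> carrier G \<Longrightarrow> h \<in> carrier G \<Longrightarrow> act (g \<otimes> h) x = act g (act h x)"
  by (simp add: rep_mult cot_act_mult invertible_rep)

lemma rep_one: "\<rho> \<one> = mat 1"
proof -
  have inverse: "matrix_inv (\<rho> \<one>) ** \<rho> \<one> = mat 1"
    using matrix_inv_inverse[OF invertible_rep[OF one_closed]] by simp
  have "mat 1 = matrix_inv (\<rho> \<one>) ** (\<rho> \<one> ** \<rho> \<one>)"
    using inverse rep_mult[OF one_closed one_closed] by simp
  also have "\<dots> = \<rho> \<one>"
    using inverse by (simp add: matrix_mul_assoc)
  finally show ?thesis by simp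
qed

lemma act_one [simp]: "act \<one> x = x"
  by (simp add: rep_one cot_act_mat_1)

lemma act_inv_act [simp]: "g \<in> carrier G \<Longrightarrow> act g (act (inv g) x) = x"
  using act_mult[of g "inv g" x] by simp

lemma sum_carrier_mult_right: "k \<in> carrier G \<Longrightarrow> (\<Sum>g\<in>carrier G. f (g \<otimes> k)) = (\<Sum>g\<in>carrier G. f g)"
  by (rule sum.reindex_bij_witness[where i="\<lambda>g. g \<otimes> inv k" and j="\<lambda>g. g \<otimes> k"]) (auto simp: m_assoc)

lemma invariants_iff: "f \<in> invariants G \<rho> \<longleftrightarrow> f \<in> polyfun \<and> (\<forall>g\<in>carrier G. \<forall>x. f (act g x) = f x)"
  by (auto simp: invariants_def fun_eq_iff)

lemma invariants_subset_polyfun: "invariants G \<rho> \<subseteq> polyfun"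
  by (auto simp: invariants_iff)

lemma function_algebra_invariants: "function_algebra (invariants G \<rho>)"
  unfolding function_algebra_def by (auto simp: invariants_iff)

lemma inv_derivs_iff: "D \<in> inv_derivs G \<rho> \<longleftrightarrow> D \<in> derivs polyfun \<and>
    (\<forall>g\<in>carrier G. \<forall>f\<in>polyfun. D (\<lambda>x. f (act g x)) = (\<lambda>x. D f (act g x)))"
  by (simp add: inv_derivs_def o_def)

lemma inv_derivs_derivs: "D \<in> inv_derivs G \<rho> \<Longrightarrow> D \<in> derivs polyfun"
  by (simp add: inv_derivs_iff)

lemma inv_derivs_comp_act:
  "D \<in> inv_derivs G \<rho> \<Longrightarrow> g \<in> carrier G \<Longrightarrow> f \<in> polyfun \<Longrightarrow> D (\<lambda>x. f (act g x)) = (\<lambda>x. D f (act g x))"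
  by (simp add: inv_derivs_iff)

lemma der_field_act:
  "D \<in> inv_derivs G \<rho> \<Longrightarrow> g \<in> carrier G \<Longrightarrow> der_field D (act g x) = act g (der_field D x)"
  by (rule der_field_cot_act[OF inv_derivs_derivs inv_derivs_comp_act])

lemma inv_derivs_invariants_closed:
  assumes D: "D \<in> inv_derivs G \<rho>" and f: "f \<in> invariants G \<rho>"
  shows "D f \<in> invariants G \<rho>"
  unfolding invariants_iff
proof (intro conjI ballI allI)
  have fp: "f \<in> polyfun" using f by (simp add: invariants_iff)
  then show "D f \<in> polyfun" by (rule derivs_closed[OF inv_derivs_derivs[OF D]])
  fix g x assume g: "g \<in> carrier G"
  have "(\<lambda>x. f (act g x)) = f" using f g by (simp add: invariants_iff fun_eq_iff)
  then show "D f (act g x) = D f x" using inv_derivs_comp_act[OF D g fp] by (metis)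
qed

lemma der_restrict_inv_derivs:
  "Z \<in> inv_derivs G \<rho> \<Longrightarrow> der_restrict (invariants G \<rho>) Z \<in> derivs (invariants G \<rho>)"
  by (rule der_restrict_derivs[OF function_algebra_invariants invariants_subset_polyfun
        inv_derivs_derivs inv_derivs_invariants_closed])

lemma der_bracket_inv_derivs:
  assumes A: "A \<in> inv_derivs G \<rho>" and B: "B \<in> inv_derivs G \<rho>"
  shows "der_bracket A B \<in> inv_derivs G \<rho>"
  unfolding inv_derivs_iff
proof (intro conjI ballI)
  show "der_bracket A B \<in> derivs polyfun"
    by (rule der_bracket_derivs[OF function_algebra_polyfun inv_derivs_derivs[OF A] inv_derivs_derivs[OF B]])
  fix g and f :: "'n pt \<Rightarrow> complex" assume g: "g \<in> carrier G" and f: "f \<in> polyfun"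
  show "der_bracket A B (\<lambda>x. f (act g x)) = (\<lambda>x. der_bracket A B f (act g x))"
    using f by (simp add: der_bracket_def inv_derivs_comp_act[OF A g] inv_derivs_comp_act[OF B g]
        derivs_closed[OF inv_derivs_derivs[OF A]] derivs_closed[OF inv_derivs_derivs[OF B]])
qed

lemma omega0_inv_derivs_invariants:
  assumes A: "A \<in> inv_derivs G \<rho>" and B: "B \<in> inv_derivs G \<rho>"
  shows "omega0 A B \<in> invariants G \<rho>"
  unfolding invariants_iff
proof (intro conjI ballI allI)
  show "omega0 A B \<in> polyfun"
    unfolding omega0_eq_sum_symp_coord
    by (intro polyfun_sum polyfun_symp_coord inv_derivs_derivs A B)
  fix g x assume g: "g \<in> carrier G"
  show "omega0 A B (act g x) = omega0 A B x"
    by (simp add: omega0_eq_symp_pair der_field_act[OF A g] der_field_act[OF B g]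
        symp_pair_cot_act invertible_rep g)
qed

text \<open>Unnormalised: the sum over \<open>\<Gamma>\<close>, not the average.\<close>

definition reynolds :: "('n pt \<Rightarrow> complex) \<Rightarrow> 'n pt \<Rightarrow> complex" where
  "reynolds h = (\<lambda>x. \<Sum>g\<in>carrier G. h (act g x))"

lemma reynolds_invariants:
  assumes h: "h \<in> polyfun"
  shows "reynolds h \<in> invariants G \<rho>"
  unfolding invariants_iff
proof (intro conjI ballI allI)
  show "reynolds h \<in> polyfun"
    unfolding reynolds_def by (rule polyfun_sum) (rule polyfun_comp_cot_act[OF h])
  fix k x assume k: "k \<in> carrier G"
  have "reynolds h (act k x) = (\<Sum>g\<in>carrier G. h (act (g \<otimes> k) x))"
    unfolding reynolds_def using k by (intro sum.cong) (simp_all add: act_mult)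
  also have "\<dots> = reynolds h x"
    unfolding reynolds_def by (rule sum_carrier_mult_right[OF k])
  finally show "reynolds h (act k x) = reynolds h x" .
qed

lemma inv_derivs_reynolds:
  assumes D: "D \<in> inv_derivs G \<rho>" and h: "h \<in> polyfun"
  shows "D (reynolds h) = reynolds (D h)"
proof -
  have "D (reynolds h) = (\<lambda>x. \<Sum>g\<in>carrier G. D (\<lambda>y. h (act g y)) x)"
    unfolding reynolds_def
    by (rule derivs_sum[OF function_algebra_polyfun inv_derivs_derivs[OF D]])
      (rule polyfun_comp_cot_act[OF h])
  also have "\<dots> = reynolds (D h)"
    unfolding reynolds_def by (simp add: inv_derivs_comp_act[OF D _ h])
  finally show ?thesis .
qed

definition stabilizer :: "'n pt \<Rightarrow> 'g set" where
  "stabilizer x = {g \<in> carrier G. act g x = x}"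

lemma card_stabilizer_nonzero: "card (stabilizer x) \<noteq> 0"
proof -
  have "\<one> \<in> stabilizer x" "finite (stabilizer x)"
    using finite_carrier by (simp_all add: stabilizer_def)
  then show ?thesis by auto
qed

definition orbit_bump :: "'n pt \<Rightarrow> ('n pt \<Rightarrow> complex) \<Rightarrow> bool" where
  "orbit_bump x v \<longleftrightarrow> v \<in> polyfun \<and> v x = 1 \<and> (\<forall>g\<in>carrier G. act g x \<noteq> x \<longrightarrow> v (act g x) = 0)"

lemma orbit_bump_exists: "\<exists>v. orbit_bump x v"
  using polyfun_bump[of "(\<lambda>g. act g x) ` carrier G - {x}" x] finite_carrier
  by (auto simp: orbit_bump_def)

lemma reynolds_orbit_bump:
  assumes "orbit_bump x v"
  shows "reynolds (\<lambda>y. v y * s y) x = of_nat (card (stabilizer x)) * s x"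
proof -
  have "reynolds (\<lambda>y. v y * s y) x = (\<Sum>g\<in>carrier G. if act g x = x then s x else 0)"
    using assms unfolding reynolds_def orbit_bump_def by (intro sum.cong) auto
  also have "\<dots> = (\<Sum>g\<in>stabilizer x. s x)"
    unfolding stabilizer_def using finite_carrier by (rule sum.inter_filter[symmetric])
  finally show ?thesis by simp
qed

text \<open>The square in \<open>v\<^sup>2\<close> makes \<open>D (v\<^sup>2) = 2 v D v\<close> vanish with \<open>v\<close>, so only the point \<open>x\<close>
  of its orbit contributes to the averages.\<close>

lemma inv_derivs_via_reynolds:
  assumes D: "D \<in> inv_derivs G \<rho>" and c: "c \<in> polyfun" and v: "orbit_bump x v"
  shows "of_nat (card (stabilizer x)) * D c x
    = D (reynolds (\<lambda>y. v y * (v y * c y))) x - c x * D (reynolds (\<lambda>y. v y * v y)) x"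
proof -
  let ?N = "of_nat (card (stabilizer x)) :: complex"
  have D': "D \<in> derivs polyfun" using D by (rule inv_derivs_derivs)
  have vp: "v \<in> polyfun" and vx: "v x = 1" using v by (simp_all add: orbit_bump_def)
  have "D (\<lambda>y. v y * v y) = (\<lambda>y. v y * (D v y + D v y))"
    unfolding derivs_mult[OF D' vp vp] by (simp add: fun_eq_iff algebra_simps)
  then have vv: "D (reynolds (\<lambda>y. v y * v y)) x = ?N * (D v x + D v x)"
    by (simp add: inv_derivs_reynolds[OF D polyfun.mult[OF vp vp]] reynolds_orbit_bump[OF v])
  have "D (\<lambda>y. v y * (v y * c y)) = (\<lambda>y. v y * (v y * D c y + D v y * c y + D v y * c y))"
    unfolding derivs_mult[OF D' vp polyfun.mult[OF vp c]] derivs_mult[OF D' vp c]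
    by (simp add: fun_eq_iff algebra_simps)
  then have vvc: "D (reynolds (\<lambda>y. v y * (v y * c y))) x = ?N * (D c x + D v x * c x + D v x * c x)"
    by (simp add: inv_derivs_reynolds[OF D polyfun.mult[OF vp polyfun.mult[OF vp c]]]
        reynolds_orbit_bump[OF v] vx)
  show ?thesis unfolding vv vvc by (simp add: algebra_simps)
qed

lemma inv_derivs_eqI:
  assumes D1: "D1 \<in> inv_derivs G \<rho>" and D2: "D2 \<in> inv_derivs G \<rho>"
    and eq: "\<And>f. f \<in> invariants G \<rho> \<Longrightarrow> D1 f = D2 f"
  shows "D1 = D2"
proof (intro ext)
  fix c x
  show "D1 c x = D2 c x"
  proof (cases "c \<in> polyfun")
    case True
    obtain v where v: "orbit_bump x v" using orbit_bump_exists by blast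
    then have vp: "v \<in> polyfun" by (simp add: orbit_bump_def)
    have "of_nat (card (stabilizer x)) * D1 c x = of_nat (card (stabilizer x)) * D2 c x"
      unfolding inv_derivs_via_reynolds[OF D1 True v] inv_derivs_via_reynolds[OF D2 True v]
      by (simp add: eq reynolds_invariants polyfun.mult vp True)
    then show ?thesis using card_stabilizer_nonzero by simp
  qed (simp add: derivs_outside[OF inv_derivs_derivs[OF D1]] derivs_outside[OF inv_derivs_derivs[OF D2]])
qed

text \<open>Equivariant by construction, so it defines an invariant derivation; with an orbit bump
  at \<open>x\<close> for \<open>u\<close> it probes the vector fields of invariant derivations at \<open>x\<close>.\<close>

definition avg_field :: "('n pt \<Rightarrow> complex) \<Rightarrow> 'n pt \<Rightarrow> 'n pt \<Rightarrow> 'n pt" where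
  "avg_field u e x = (\<Sum>g\<in>carrier G. pt_scale (u (act g x)) (act (inv g) e))"

lemma poly_vfield_avg_field:
  assumes "u \<in> polyfun"
  shows "poly_vfield (avg_field u e)"
  unfolding poly_vfield_def avg_field_def pt_scale_def
  by (auto simp: fst_sum snd_sum intro!: polyfun_sum polyfun.mult polyfun_comp_cot_act[OF assms])

lemma avg_field_act:
  assumes h: "h \<in> carrier G"
  shows "avg_field u e (act h x) = act h (avg_field u e x)"
proof -
  let ?F = "\<lambda>g. pt_scale (u (act (g \<otimes> h) x)) (act (inv g) e)"
  have "avg_field u e (act h x) = (\<Sum>g\<in>carrier G. ?F g)"
    unfolding avg_field_def using h by (intro sum.cong) (simp_all add: act_mult)
  also have "\<dots> = (\<Sum>g\<in>carrier G. ?F (g \<otimes> inv h))"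
    by (rule sum_carrier_mult_right[OF inv_closed[OF h], symmetric])
  also have "\<dots> = (\<Sum>g\<in>carrier G. act h (pt_scale (u (act g x)) (act (inv g) e)))"
    using h by (intro sum.cong) (simp_all add: m_assoc inv_mult_group act_mult cot_act_pt_scale)
  also have "\<dots> = act h (avg_field u e x)"
    by (simp add: avg_field_def cot_act_sum)
  finally show ?thesis .
qed

lemma avg_field_inv_derivs: "u \<in> polyfun \<Longrightarrow> vfield_deriv (avg_field u e) \<in> inv_derivs G \<rho>"
  unfolding inv_derivs_iff
  by (simp add: vfield_deriv_derivs poly_vfield_avg_field vfield_deriv_comp_cot_act avg_field_act)

lemma inv_derivs_omega0_nondegenerate:
  assumes W: "W \<in> inv_derivs G \<rho>"
    and orth: "\<And>Z. Z \<in> inv_derivs G \<rho> \<Longrightarrow> omega0 W Z = (\<lambda>_. 0)"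
  shows "W = (\<lambda>f x. 0)"
proof (rule der_field_eq_0_imp_zero[OF inv_derivs_derivs[OF W]])
  fix x
  obtain v where v: "orbit_bump x v" using orbit_bump_exists by blast
  have "of_nat (card (stabilizer x)) * symp_pair (der_field W x) e = 0" for e
  proof -
    have shift: "symp_pair (der_field W x) (act (inv g) e) = symp_pair (der_field W (act g x)) e"
      if g: "g \<in> carrier G" for g
      using symp_pair_cot_act[OF invertible_rep[OF g], of "der_field W x" "act (inv g) e"]
      by (simp add: der_field_act[OF W g] g)
    have "0 = omega0 W (vfield_deriv (avg_field v e)) x"
      using orth[OF avg_field_inv_derivs] v by (simp add: orbit_bump_def)
    also have "\<dots> = (\<Sum>g\<in>carrier G. v (act g x) * symp_pair (der_field W x) (act (inv g) e))"
      by (simp add: omega0_eq_symp_pair der_field_vfield_deriv avg_field_def symp_pair_sum_right)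
    also have "\<dots> = reynolds (\<lambda>y. v y * symp_pair (der_field W y) e) x"
      unfolding reynolds_def by (intro sum.cong) (simp_all add: shift)
    also have "\<dots> = of_nat (card (stabilizer x)) * symp_pair (der_field W x) e"
      by (rule reynolds_orbit_bump[OF v])
    finally show ?thesis by simp
  qed
  then show "der_field W x = 0"
    using card_stabilizer_nonzero by (intro symp_pair_nondegenerate) simp
qed

end

text \<open>Only the section property of \<open>\<lambda>\<close> is assumed: its \<open>R\<^sup>\<Gamma>\<close>-linearity is needed just for the
  bilinearity of \<open>\<omega>\<close>, not for closedness or non-degeneracy.\<close>

locale invariant_section = cotangent_representation G \<rho>
  for G :: "('g, 'b) monoid_scheme" (structure) and \<rho> :: "'g \<Rightarrow> complex^'n::finite^'n" +
  fixes lam :: "'n der \<Rightarrow> 'n der"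
  assumes lam_inv_derivs: "X \<in> derivs (invariants G \<rho>) \<Longrightarrow> lam X \<in> inv_derivs G \<rho>"
    and lam_extends: "X \<in> derivs (invariants G \<rho>) \<Longrightarrow> f \<in> invariants G \<rho> \<Longrightarrow> lam X f = X f"
begin

abbreviation omega :: "'n der \<Rightarrow> 'n der \<Rightarrow> 'n pt \<Rightarrow> complex" where
  "omega X Y \<equiv> omega0 (lam X) (lam Y)"

lemma lam_der_restrict:
  assumes Z: "Z \<in> inv_derivs G \<rho>"
  shows "lam (der_restrict (invariants G \<rho>) Z) = Z"
proof (rule inv_derivs_eqI[OF lam_inv_derivs[OF der_restrict_inv_derivs[OF Z]] Z])
  fix f assume f: "f \<in> invariants G \<rho>"
  then show "lam (der_restrict (invariants G \<rho>) Z) f = Z f"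
    unfolding lam_extends[OF der_restrict_inv_derivs[OF Z] f] by (simp add: der_restrict_def)
qed

lemma lam_der_bracket:
  assumes X: "X \<in> derivs (invariants G \<rho>)" and Y: "Y \<in> derivs (invariants G \<rho>)"
  shows "lam (der_bracket X Y) = der_bracket (lam X) (lam Y)"
proof (rule inv_derivs_eqI)
  have XY: "der_bracket X Y \<in> derivs (invariants G \<rho>)"
    by (rule der_bracket_derivs[OF function_algebra_invariants X Y])
  then show "lam (der_bracket X Y) \<in> inv_derivs G \<rho>" by (rule lam_inv_derivs)
  show "der_bracket (lam X) (lam Y) \<in> inv_derivs G \<rho>"
    by (intro der_bracket_inv_derivs lam_inv_derivs X Y)
  fix f assume f: "f \<in> invariants G \<rho>"
  have "lam (der_bracket X Y) f = der_bracket X Y f"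
    by (rule lam_extends[OF XY f])
  also have "\<dots> = der_bracket (lam X) (lam Y) f"
    unfolding der_bracket_def
    by (simp only: lam_extends[OF X f] lam_extends[OF Y f]
        lam_extends[OF X derivs_closed[OF Y f]] lam_extends[OF Y derivs_closed[OF X f]])
  finally show "lam (der_bracket X Y) f = der_bracket (lam X) (lam Y) f" .
qed

lemma omega_invariants:
  "X \<in> derivs (invariants G \<rho>) \<Longrightarrow> Y \<in> derivs (invariants G \<rho>) \<Longrightarrow> omega X Y \<in> invariants G \<rho>"
  by (intro omega0_inv_derivs_invariants lam_inv_derivs)

lemma omega_closed:
  assumes X: "X0 \<in> derivs (invariants G \<rho>)" "X1 \<in> derivs (invariants G \<rho>)" "X2 \<in> derivs (invariants G \<rho>)"
  shows "d2 omega X0 X1 X2 = (\<lambda>_. 0)"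
proof -
  have ext: "X (omega Y Z) = lam X (omega Y Z)"
    if "X \<in> derivs (invariants G \<rho>)" "Y \<in> derivs (invariants G \<rho>)" "Z \<in> derivs (invariants G \<rho>)" for X Y Z
    using that by (simp add: lam_extends omega_invariants)
  have "d2 omega X0 X1 X2 = d2 omega0 (lam X0) (lam X1) (lam X2)"
    by (simp only: d2_def ext[OF X(1,2,3)] ext[OF X(2,1,3)] ext[OF X(3,1,2)]
        lam_der_bracket[OF X(1,2)] lam_der_bracket[OF X(1,3)] lam_der_bracket[OF X(2,3)])
  also have "\<dots> = (\<lambda>_. 0)"
    using X by (intro d2_omega0 inv_derivs_derivs lam_inv_derivs)
  finally show ?thesis .
qed

lemma omega_nondegenerate:
  assumes X: "X \<in> derivs (invariants G \<rho>)"
    and orth: "\<forall>Y\<in>derivs (invariants G \<rho>). omega X Y = (\<lambda>_. 0)"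
  shows "X = (\<lambda>f x. 0)"
proof -
  have "lam X = (\<lambda>f x. 0)"
  proof (rule inv_derivs_omega0_nondegenerate[OF lam_inv_derivs[OF X]])
    fix Z assume "Z \<in> inv_derivs G \<rho>"
    then show "omega0 (lam X) Z = (\<lambda>_. 0)"
      using orth der_restrict_inv_derivs lam_der_restrict by metis
  qed
  then show ?thesis
    using lam_extends[OF X] derivs_outside[OF X] by (metis ext)
qed

end

theorem mainTheorem7:
  fixes G :: "('g, 'b) monoid_scheme"
    and \<rho> :: "'g \<Rightarrow> complex^'n::finite^'n"
    and lam :: "(('n pt \<Rightarrow> complex) \<Rightarrow> ('n pt \<Rightarrow> complex)) \<Rightarrow> (('n pt \<Rightarrow> complex) \<Rightarrow> ('n pt \<Rightarrow> complex))"
  assumes "group G" and "finite (carrier G)"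
    and "\<forall>g\<in>carrier G. invertible (\<rho> g)"
    and "\<forall>g\<in>carrier G. \<forall>h\<in>carrier G. \<rho> (g \<otimes>\<^bsub>G\<^esub> h) = \<rho> g ** \<rho> h"
    and "\<forall>X\<in>derivs (invariants G \<rho>). lam X \<in> inv_derivs G \<rho>"
    and "\<forall>X\<in>derivs (invariants G \<rho>). \<forall>Y\<in>derivs (invariants G \<rho>).
           lam (der_add X Y) = der_add (lam X) (lam Y)"
    and "\<forall>a\<in>invariants G \<rho>. \<forall>X\<in>derivs (invariants G \<rho>).
           lam (der_smult a X) = der_smult a (lam X)"
    and "\<forall>X\<in>derivs (invariants G \<rho>). \<forall>f\<in>invariants G \<rho>. lam X f = X f"
  shows "let R\<Gamma> = invariants G \<rho>; D = derivs R\<Gamma>; \<omega> = (\<lambda>X Y. omega0 (lam X) (lam Y)) in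
           (\<forall>X\<in>D. \<forall>Y\<in>D. \<omega> X Y \<in> R\<Gamma>)
         \<and> (\<forall>X\<in>D. \<forall>Y\<in>D. \<forall>Z\<in>D. \<omega> (der_add X Y) Z = (\<lambda>x. \<omega> X Z x + \<omega> Y Z x))
         \<and> (\<forall>a\<in>R\<Gamma>. \<forall>X\<in>D. \<forall>Y\<in>D. \<omega> (der_smult a X) Y = (\<lambda>x. a x * \<omega> X Y x))
         \<and> (\<forall>X\<in>D. \<omega> X X = (\<lambda>x. 0))
         \<and> (\<forall>X0\<in>D. \<forall>X1\<in>D. \<forall>X2\<in>D. d2 \<omega> X0 X1 X2 = (\<lambda>x. 0))
         \<and> (\<forall>X\<in>D. (\<forall>Y\<in>D. \<omega> X Y = (\<lambda>x. 0)) \<longrightarrow> X = (\<lambda>f x. 0))"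
proof -
  have "invariant_section G \<rho> lam"
    using assms
    by (simp add: invariant_section_def invariant_section_axioms_def
        cotangent_representation_def cotangent_representation_axioms_def)
  then interpret invariant_section G \<rho> lam .
  show ?thesis
    unfolding Let_def
    using assms(6,7)
    by (simp add: omega_invariants omega0_der_add omega0_der_smult omega0_self omega_closed
        omega_nondegenerate)
qed

end
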